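(* Let $U$ and $X$ be compact metric spaces, let $T:U\to U$ be a surjective map (not necessarily continuous), and let $g:U\times X\to X$ be a continuous driven system which is SI-invertible. Let $Y_T\subset X\times X$ be the relation induced by $(U,T)$. Then there exists a well-defined map $G_T:Y_T\to Y_T$ such that for every orbit $\bar u=\{u_k\}_{k\in\mathbb Z}$ of $T$, every solution $\{x_k\}_{k\in\mathbb Z}$ of $g$ for the input $\bar u$, and every $n\in\mathbb Z$, $$G_T(x_{n-1},x_n)=(x_n,x_{n+1}).$$
   Context: An orbit of $T$ is a bi-infinite sequence $\{u_n\}_{n\in\mathbb Z}\subset U$ with $u_{n+1}=Tu_n$ for all $n\in\mathbb Z$. A driven system is a continuous map $g:U\times X\to X$ with $U,X$ compact metric spaces. Given a bi-infinite input $\bar u=\{u_n\}_{n\in\mathbb Z}\subset U$, a solution of $g$ for $\bar u$ is a bi-infinite sequence $\{x_n\}_{n\in\mathbb Z}\subset X$ with $x_{n+1}=g(u_n,x_n)$ for all $n\in\mathbb Z$. The driven system $g$ is SI-invertible (state-input invertible) if for every $x\in X$ the map $g(\cdot,x):U\to X$ is injective, i.e. whenever $x_{n+1}=g(u_n,x_n)$, the input $u_n$ is uniquely determined by $x_n$ and $x_{n+1}$. The relation induced by $(U,T)$ is $$Y_T:=\{(x_{n-1},x_n): \{x_k\}_{k\in\mathbb Z}\text{ is a solution of }g\text{ for some orbit of }T,\ n\in\mathbb Z\}.$$ *)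

theory Defs
  imports "HOL-Analysis.Analysis"
begin

definition is_orbit :: "'u set \<Rightarrow> ('u \<Rightarrow> 'u) \<Rightarrow> (int \<Rightarrow> 'u) \<Rightarrow> bool" where
  "is_orbit U T u \<longleftrightarrow> (\<forall>n. u n \<in> U) \<and> (\<forall>n. u (n + 1) = T (u n))"

definition is_solution :: "'x set \<Rightarrow> ('u \<times> 'x \<Rightarrow> 'x) \<Rightarrow> (int \<Rightarrow> 'u) \<Rightarrow> (int \<Rightarrow> 'x) \<Rightarrow> bool" where
  "is_solution X g u x \<longleftrightarrow> (\<forall>n. x n \<in> X) \<and> (\<forall>n. x (n + 1) = g (u n, x n))"

definition SI_invertible :: "'u set \<Rightarrow> 'x set \<Rightarrow> ('u \<times> 'x \<Rightarrow> 'x) \<Rightarrow> bool" where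
  "SI_invertible U X g \<longleftrightarrow> (\<forall>x\<in>X. inj_on (\<lambda>u. g (u, x)) U)"

definition induced_relation ::
  "'u set \<Rightarrow> ('u \<Rightarrow> 'u) \<Rightarrow> 'x set \<Rightarrow> ('u \<times> 'x \<Rightarrow> 'x) \<Rightarrow> ('x \<times> 'x) set" where
  "induced_relation U T X g =
     {(x (n - 1), x n) | u x n. is_orbit U T u \<and> is_solution X g u x}"

end

theory Submission
  imports Defs
begin

text \<open>SI-invertibility lets one read the input \<open>u (n - 1)\<close> off the pair
\<open>(x (n - 1), x n)\<close>; the next state \<open>x (n + 1) = g (T (u (n - 1)), x n)\<close> is then a
function of that pair alone.\<close>

definition recovered_input :: "'u set \<Rightarrow> ('u \<times> 'x \<Rightarrow> 'x) \<Rightarrow> 'x \<Rightarrow> 'x \<Rightarrow> 'u" where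
  "recovered_input U g x y = (THE u. u \<in> U \<and> g (u, x) = y)"

definition induced_map ::
  "'u set \<Rightarrow> ('u \<Rightarrow> 'u) \<Rightarrow> ('u \<times> 'x \<Rightarrow> 'x) \<Rightarrow> 'x \<times> 'x \<Rightarrow> 'x \<times> 'x" where
  "induced_map U T g p = (snd p, g (T (recovered_input U g (fst p) (snd p)), snd p))"

lemma recovered_input_eq:
  assumes "SI_invertible U X g" and "x \<in> X" and "u \<in> U"
  shows "recovered_input U g x (g (u, x)) = u"
proof -
  have "inj_on (\<lambda>v. g (v, x)) U"
    using assms(1,2) by (simp add: SI_invertible_def)
  then show ?thesis
    unfolding recovered_input_def using assms(3) by (auto simp: inj_on_def)
qed

lemma is_orbit_step: "is_orbit U T u \<Longrightarrow> u n = T (u (n - 1))"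
  unfolding is_orbit_def by (metis diff_add_cancel)

lemma is_solution_step: "is_solution X g u x \<Longrightarrow> x n = g (u (n - 1), x (n - 1))"
  unfolding is_solution_def by (metis diff_add_cancel)

lemma induced_map_solution:
  assumes "SI_invertible U X g" and "is_orbit U T u" and "is_solution X g u x"
  shows "induced_map U T g (x (n - 1), x n) = (x n, x (n + 1))"
proof -
  have "x (n - 1) \<in> X" and "u (n - 1) \<in> U"
    using assms(2,3) by (simp_all add: is_orbit_def is_solution_def)
  then have "recovered_input U g (x (n - 1)) (x n) = u (n - 1)"
    using recovered_input_eq[OF assms(1)] is_solution_step[OF assms(3), of n] by simp
  then show ?thesis
    using is_orbit_step[OF assms(2), of n] is_solution_step[OF assms(3), of "n + 1"]
    by (simp add: induced_map_def)
qed

lemma induced_map_maps_induced_relation: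
  assumes "SI_invertible U X g"
  shows "induced_map U T g ` induced_relation U T X g \<subseteq> induced_relation U T X g"
proof
  fix q assume "q \<in> induced_map U T g ` induced_relation U T X g"
  then obtain u x n where orbit: "is_orbit U T u" and sol: "is_solution X g u x"
    and q: "q = induced_map U T g (x (n - 1), x n)"
    unfolding induced_relation_def by blast
  have "q = (x ((n + 1) - 1), x (n + 1))"
    using induced_map_solution[OF assms orbit sol] q by simp
  then show "q \<in> induced_relation U T X g"
    using orbit sol unfolding induced_relation_def by blast
qed

theorem theorem3:
  fixes U :: "'u::metric_space set" and X :: "'x::metric_space set"
    and T :: "'u \<Rightarrow> 'u" and g :: "'u \<times> 'x \<Rightarrow> 'x"
  assumes "compact U" and "compact X"
    and "T ` U = U"
    and "continuous_on (U \<times> X) g" and "g ` (U \<times> X) \<subseteq> X"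
    and "SI_invertible U X g"
  shows "\<exists>G. G ` induced_relation U T X g \<subseteq> induced_relation U T X g \<and>
           (\<forall>u x n. is_orbit U T u \<longrightarrow> is_solution X g u x \<longrightarrow>
              G (x (n - 1), x n) = (x n, x (n + 1)))"
  using induced_map_maps_induced_relation[OF assms(6)] induced_map_solution[OF assms(6)]
  by blast

end
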